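(* Let $p\in(0,1]$, let $\Omega\subset\mathbb R^n$ be open, and let $B$ be a ball with centre in $\Omega$ such that $4B\cap\partial\Omega\neq\emptyset$. If $f:\Omega\to\mathbb R$ is supported in $B\cap\Omega$ and $\|f\|_{L^\infty}\le C_0|B|^{-1/p}$, then $\|f\|_{H^p_{Mi}(\Omega)}\le C$, where $C$ depends only on $C_0$, $n$ and $p$.
   Context: $\lambda B$ denotes the ball with the same centre as $B$ and $\lambda$ times its radius; $|\cdot|$ is Lebesgue measure. Miyachi Hardy space: for $p\in(0,1]$, an $H^p_{Mi}(\Omega)$-atom is a bounded measurable $a:\Omega\to\mathbb R$ supported in a ball $B\subset\Omega$ with $\|a\|_{L^\infty}\le|B|^{-1/p}$ and such that either $2B\subset\Omega$ and $4B\cap\partial\Omega\ne\emptyset$, or $4B\subset\Omega$ and $\int x^\alpha a(x)\,dx=0$ for all multi-indices $|\alpha|\le[n(1/p-1)]$. $H^p_{Mi}(\Omega)$ is the set of distributions $f=\sum_j\lambda_ja_j$ with such atoms and $\sum|\lambda_j|^p<\infty$, with $\|f\|^p_{H^p_{Mi}}=\inf\sum_j|\lambda_j|^p$ over all such decompositions. *)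

theory Defs
  imports "HOL-Analysis.Analysis"
begin

fun Ck :: "nat \<Rightarrow> ('a::euclidean_space \<Rightarrow> real) \<Rightarrow> bool" where
  "Ck 0 f = continuous_on UNIV f"
| "Ck (Suc k) f = (continuous_on UNIV f \<and> f differentiable_on UNIV \<and>
      (\<forall>v. Ck k (\<lambda>x. frechet_derivative f (at x) v)))"

definition smooth :: "('a::euclidean_space \<Rightarrow> real) \<Rightarrow> bool" where
  "smooth f \<longleftrightarrow> (\<forall>k. Ck k f)"

(* test functions C_c^\<infinity>(\<Omega>), extended by zero to the whole space *)
definition test_function :: "'a::euclidean_space set \<Rightarrow> ('a \<Rightarrow> real) \<Rightarrow> bool" where
  "test_function \<Omega> \<phi> \<longleftrightarrow> smooth \<phi> \<and> compact (closure {x. \<phi> x \<noteq> 0})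
      \<and> closure {x. \<phi> x \<noteq> 0} \<subseteq> \<Omega>"

definition monomial :: "('a::euclidean_space \<Rightarrow> nat) \<Rightarrow> 'a \<Rightarrow> real" where
  "monomial \<alpha> x = (\<Prod>i\<in>Basis. (x \<bullet> i) ^ (\<alpha> i))"

definition mi_order :: "('a::euclidean_space \<Rightarrow> nat) \<Rightarrow> nat" where
  "mi_order \<alpha> = (\<Sum>i\<in>Basis. \<alpha> i)"

definition HpMi_atom :: "real \<Rightarrow> 'a::euclidean_space set \<Rightarrow> ('a \<Rightarrow> real) \<Rightarrow> bool" where
  "HpMi_atom p \<Omega> a \<longleftrightarrow> (\<exists>c r. r > 0 \<and> ball c r \<subseteq> \<Omega> \<and>
      set_borel_measurable lebesgue \<Omega> a \<and>
      (\<forall>x. x \<notin> ball c r \<longrightarrow> a x = 0) \<and>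
      (\<exists>M. \<forall>x. \<bar>a x\<bar> \<le> M) \<and>
      (AE x in lebesgue. x \<in> \<Omega> \<longrightarrow> \<bar>a x\<bar> \<le> measure lebesgue (ball c r) powr (-1/p)) \<and>
      ((ball c (2*r) \<subseteq> \<Omega> \<and> ball c (4*r) \<inter> frontier \<Omega> \<noteq> {}) \<or>
       (ball c (4*r) \<subseteq> \<Omega> \<and>
        (\<forall>\<alpha>. mi_order \<alpha> \<le> nat \<lfloor>real DIM('a) * (1/p - 1)\<rfloor> \<longrightarrow>
              (LINT x:\<Omega>|lebesgue. monomial \<alpha> x * a x) = 0))))"

(* f = \<Sum>_j \<lambda>_j a_j in the sense of distributions on \<Omega>, with atoms a_j *)
definition HpMi_decomp :: "real \<Rightarrow> 'a::euclidean_space set \<Rightarrow> ('a \<Rightarrow> real)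
      \<Rightarrow> (nat \<Rightarrow> real) \<Rightarrow> (nat \<Rightarrow> 'a \<Rightarrow> real) \<Rightarrow> bool" where
  "HpMi_decomp p \<Omega> f lam a \<longleftrightarrow> (\<forall>j. HpMi_atom p \<Omega> (a j)) \<and>
      summable (\<lambda>j. \<bar>lam j\<bar> powr p) \<and>
      (\<forall>\<phi>. test_function \<Omega> \<phi> \<longrightarrow>
         (\<lambda>j. lam j * (LINT x:\<Omega>|lebesgue. a j x * \<phi> x)) sums (LINT x:\<Omega>|lebesgue. f x * \<phi> x))"

definition HpMi_norm :: "real \<Rightarrow> 'a::euclidean_space set \<Rightarrow> ('a \<Rightarrow> real) \<Rightarrow> ennreal" where
  "HpMi_norm p \<Omega> f =
     (let S = {(\<Sum>j. \<bar>lam j\<bar> powr p) | lam a. HpMi_decomp p \<Omega> f lam a}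
      in if S = {} then \<infinity> else ennreal ((Inf S) powr (1/p)))"

end

theory Submission
  imports Defs
begin

text \<open>Write \<open>d(x)\<close> for the distance from \<open>x\<close> to \<open>\<partial>\<Omega>\<close>. By Vitali's covering lemma there are centres
  \<open>x\<^sub>j \<in> \<Omega> \<inter> B\<close> such that the balls of radius \<open>d(x\<^sub>j)/10\<close> are pairwise disjoint and the balls
  \<open>B\<^sub>j\<close> of radius \<open>d(x\<^sub>j)/2\<close> cover \<open>\<Omega> \<inter> B\<close>. Every \<open>B\<^sub>j\<close> satisfies \<open>2B\<^sub>j \<subseteq> \<Omega>\<close> and
  \<open>4B\<^sub>j \<inter> \<partial>\<Omega> \<noteq> {}\<close>, so the restrictions of \<open>f\<close> to a disjoint refinement of the \<open>B\<^sub>j\<close>,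
  normalised by \<open>\<lambda>\<^sub>j = C\<^sub>0 (|B\<^sub>j| / |B|)\<^bsup>1/p\<^esup>\<close>, are atoms without moment conditions.
  Since \<open>4B\<close> meets \<open>\<partial>\<Omega>\<close>, \<open>d < 5r\<close> on \<open>B\<close>; hence the small balls lie in \<open>2B\<close> and
  \<open>\<Sum> |B\<^sub>j| \<le> 5\<^sup>n |2B| = 10\<^sup>n |B|\<close>, i.e. \<open>\<Sum> \<lambda>\<^sub>j\<^sup>p \<le> 10\<^sup>n C\<^sub>0\<^sup>p\<close>.\<close>

lemma ball_infdist_frontier_subset:
  fixes \<Omega> :: "'a::euclidean_space set"
  assumes "x \<in> \<Omega>"
  shows "ball x (infdist x (frontier \<Omega>)) \<subseteq> \<Omega>"
proof (rule ccontr)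
  let ?D = "ball x (infdist x (frontier \<Omega>))"
  assume "\<not> ?D \<subseteq> \<Omega>"
  then have "0 < infdist x (frontier \<Omega>)"
    by (metis ball_eq_empty empty_subsetI not_less)
  then have "x \<in> ?D \<inter> \<Omega>"
    using assms by simp
  moreover note \<open>\<not> ?D \<subseteq> \<Omega>\<close>
  ultimately have "?D \<inter> frontier \<Omega> \<noteq> {}"
    by (intro connected_Int_frontier connected_ball) blast+
  then show False
    by (auto dest: infdist_le[of _ "frontier \<Omega>" x])
qed

lemma infdist_frontier_boundary_ball:
  fixes \<Omega> :: "'a::euclidean_space set"
  assumes "open \<Omega>" "x \<in> \<Omega>" "frontier \<Omega> \<noteq> {}"
  defines "\<rho> \<equiv> infdist x (frontier \<Omega>) / 2"
  shows "0 < \<rho>" "ball x (2 * \<rho>) \<subseteq> \<Omega>" "ball x (4 * \<rho>) \<inter> frontier \<Omega> \<noteq> {}"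
proof -
  have "x \<notin> frontier \<Omega>"
    using assms(1,2) by (simp add: frontier_def interior_open)
  then show pos: "0 < \<rho>"
    using assms(3) by (simp add: \<rho>_def infdist_pos_not_in_closed)
  show "ball x (2 * \<rho>) \<subseteq> \<Omega>"
    using ball_infdist_frontier_subset[OF assms(2)] by (simp add: \<rho>_def)
  obtain y where "y \<in> frontier \<Omega>" "infdist x (frontier \<Omega>) = dist x y"
    using infdist_attains_inf[of "frontier \<Omega>"] assms(3) by blast
  moreover from this(2) have "y \<in> ball x (4 * \<rho>)"
    using pos by (simp add: \<rho>_def)
  ultimately show "ball x (4 * \<rho>) \<inter> frontier \<Omega> \<noteq> {}"
    by blast
qed

lemma measure_ball_scale:
  fixes x :: "'a::euclidean_space"
  assumes "0 \<le> k" "0 \<le> s"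
  shows "measure lebesgue (ball x (k * s)) = k ^ DIM('a) * measure lebesgue (ball x s)"
  using assms by (simp add: content_ball power_mult_distrib)

lemma sum_measure_dilated_balls_le:
  fixes s :: "'a::euclidean_space \<Rightarrow> real"
  assumes "finite F" "0 \<le> k" "U \<in> lmeasurable"
    and "pairwise (\<lambda>x y. disjnt (ball x (s x)) (ball y (s y))) F"
    and "\<And>x. x \<in> F \<Longrightarrow> 0 \<le> s x \<and> ball x (s x) \<subseteq> U"
  shows "(\<Sum>x\<in>F. measure lebesgue (ball x (k * s x))) \<le> k ^ DIM('a) * measure lebesgue U"
proof -
  have "(\<Sum>x\<in>F. measure lebesgue (ball x (k * s x)))
      = k ^ DIM('a) * (\<Sum>x\<in>F. measure lebesgue (ball x (s x)))"
    using assms(2,5) by (simp add: measure_ball_scale sum_distrib_left del: measure_completion)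
  also have "(\<Sum>x\<in>F. measure lebesgue (ball x (s x))) = measure lebesgue (\<Union>x\<in>F. ball x (s x))"
    using assms(1,4) by (intro measure_UNION'[symmetric]) auto
  also have "k ^ DIM('a) * \<dots> \<le> k ^ DIM('a) * measure lebesgue U"
    using assms by (intro mult_left_mono measure_mono_fmeasurable) auto
  finally show ?thesis .
qed

lemma Vitali_sequence_balls:
  fixes K :: "'a::euclidean_space set"
  assumes "K \<noteq> {}" "\<And>x. x \<in> K \<Longrightarrow> 0 < s x \<and> s x \<le> R"
  obtains z :: "nat \<Rightarrow> 'a"
  where "range z \<subseteq> K" "K \<subseteq> (\<Union>j. ball (z j) (5 * s (z j)))"
    and "pairwise (\<lambda>x y. disjnt (ball x (s x)) (ball y (s y))) (range z)"
proof -
  have "K \<subseteq> (\<Union>x\<in>K. ball x (s x))"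
    using assms(2) by force
  then obtain C where C: "countable C" "C \<subseteq> K"
      "pairwise (\<lambda>x y. disjnt (ball x (s x)) (ball y (s y))) C" "K \<subseteq> (\<Union>x\<in>C. ball x (5 * s x))"
    by (rule Vitali_covering_lemma_balls[where a = "\<lambda>x. x", OF _ assms(2)]) blast
  then have "C \<noteq> {}"
    using assms(1) by blast
  then obtain z :: "nat \<Rightarrow> 'a" where "range z = C"
    by (metis C(1) range_from_nat_into)
  then show thesis
    using C(2-4) by (intro that[of z]) auto
qed

lemma boundary_Whitney_cover:
  fixes \<Omega> :: "'a::euclidean_space set"
  assumes "open \<Omega>" "c \<in> \<Omega>" "0 < r" "ball c (4 * r) \<inter> frontier \<Omega> \<noteq> {}"
  defines "\<rho> \<equiv> \<lambda>x. infdist x (frontier \<Omega>) / 2"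
  obtains z :: "nat \<Rightarrow> 'a"
  where "range z \<subseteq> \<Omega> \<inter> ball c r" "\<Omega> \<inter> ball c r \<subseteq> (\<Union>j. ball (z j) (\<rho> (z j)))"
    and "\<And>F. finite F \<Longrightarrow> F \<subseteq> range z \<Longrightarrow>
           (\<Sum>x\<in>F. measure lebesgue (ball x (\<rho> x))) \<le> 10 ^ DIM('a) * measure lebesgue (ball c r)"
proof -
  let ?K = "\<Omega> \<inter> ball c r"
  let ?d = "\<lambda>x. infdist x (frontier \<Omega>)"
  obtain y where y: "y \<in> frontier \<Omega>" "dist c y < 4 * r"
    using assms(4) by auto
  have d_pos: "0 < ?d x" if "x \<in> ?K" for x
    using infdist_frontier_boundary_ball(1)[OF assms(1), of x] that y(1) by auto
  have d_less: "?d x < 5 * r" if "x \<in> ?K" for x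
  proof -
    have "?d x \<le> dist x c + dist c y"
      using infdist_le[OF y(1), of x] dist_triangle[of x y c] by linarith
    then show ?thesis
      using that y(2) by (simp add: dist_commute)
  qed
  have radii: "0 < ?d x / 10 \<and> ?d x / 10 \<le> r" if "x \<in> ?K" for x
    using d_pos[OF that] d_less[OF that] by simp
  have "?K \<noteq> {}"
    using assms(2,3) by auto
  then obtain z :: "nat \<Rightarrow> 'a" where z: "range z \<subseteq> ?K"
      "?K \<subseteq> (\<Union>j. ball (z j) (5 * (?d (z j) / 10)))"
      "pairwise (\<lambda>x y. disjnt (ball x (?d x / 10)) (ball y (?d y / 10))) (range z)"
    by (rule Vitali_sequence_balls[OF _ radii])
  show thesis
  proof
    show "range z \<subseteq> ?K"
      by (fact z(1))
    show "?K \<subseteq> (\<Union>j. ball (z j) (\<rho> (z j)))"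
      using z(2) by (simp add: \<rho>_def)
    fix F assume F: "finite F" "F \<subseteq> range z"
    have small_balls: "ball x (?d x / 10) \<subseteq> ball c (2 * r)" if "x \<in> ?K" for x
    proof
      fix w assume "w \<in> ball x (?d x / 10)"
      then have "dist c w < r + ?d x / 10"
        using that dist_triangle[of c w x] by simp
      then show "w \<in> ball c (2 * r)"
        using d_less[OF that] assms(3) by simp
    qed
    have "(\<Sum>x\<in>F. measure lebesgue (ball x (\<rho> x)))
        = (\<Sum>x\<in>F. measure lebesgue (ball x (5 * (?d x / 10))))"
      by (simp add: \<rho>_def)
    also have "\<dots> \<le> 5 ^ DIM('a) * measure lebesgue (ball c (2 * r))"
    proof (rule sum_measure_dilated_balls_le)
      show "pairwise (\<lambda>x y. disjnt (ball x (?d x / 10)) (ball y (?d y / 10))) F"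
        by (rule pairwise_subset[OF z(3) F(2)])
      show "0 \<le> ?d x / 10 \<and> ball x (?d x / 10) \<subseteq> ball c (2 * r)" if "x \<in> F" for x
      proof -
        have "x \<in> ?K"
          using that F(2) z(1) by blast
        then show ?thesis
          using small_balls by (simp add: infdist_nonneg)
      qed
    qed (simp_all add: F(1))
    also have "\<dots> = (5 ^ DIM('a) * 2 ^ DIM('a)) * measure lebesgue (ball c r)"
      using assms(3) measure_ball_scale[of 2 r c] by simp
    also have "\<dots> = 10 ^ DIM('a) * measure lebesgue (ball c r)"
      by (simp flip: power_mult_distrib)
    finally show "(\<Sum>x\<in>F. measure lebesgue (ball x (\<rho> x))) \<le> 10 ^ DIM('a) * measure lebesgue (ball c r)" .
  qed
qed

lemma HpMi_atom_boundaryI: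
  fixes \<Omega> :: "'a::euclidean_space set"
  assumes "0 < \<rho>" "ball x (2 * \<rho>) \<subseteq> \<Omega>" "ball x (4 * \<rho>) \<inter> frontier \<Omega> \<noteq> {}"
    and "set_borel_measurable lebesgue \<Omega> a" "\<And>y. y \<notin> ball x \<rho> \<Longrightarrow> a y = 0"
    and "\<And>y. \<bar>a y\<bar> \<le> measure lebesgue (ball x \<rho>) powr (-1/p)"
  shows "HpMi_atom p \<Omega> a"
proof -
  have "ball x \<rho> \<subseteq> \<Omega>"
    using assms(1,2) subset_ball[of \<rho> "2 * \<rho>" x] by simp
  then show ?thesis
    unfolding HpMi_atom_def using assms by blast
qed

lemma test_function_continuous:
  "test_function \<Omega> \<phi> \<Longrightarrow> continuous_on UNIV \<phi>"
  by (metis Ck.simps(1) smooth_def test_function_def)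

lemma test_function_bounded:
  assumes "test_function \<Omega> \<phi>"
  obtains P where "\<And>x. \<bar>\<phi> x\<bar> \<le> P"
proof -
  let ?S = "closure {x. \<phi> x \<noteq> 0}"
  have "compact (\<phi> ` ?S)"
    using assms test_function_continuous[OF assms]
    unfolding test_function_def by (blast intro: compact_continuous_image continuous_on_subset)
  then have "bounded (insert 0 (\<phi> ` ?S))"
    by (simp add: compact_imp_bounded)
  moreover have "\<phi> x \<in> insert 0 (\<phi> ` ?S)" for x
    using closure_subset[of "{x. \<phi> x \<noteq> 0}"] by auto
  ultimately show thesis
    by (metis bounded_iff real_norm_def that)
qed

lemma test_function_measurable:
  "test_function \<Omega> \<phi> \<Longrightarrow> \<phi> \<in> borel_measurable lebesgue"
  by (intro measurable_completion) (simp add: borel_measurable_continuous_onI test_function_continuous)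

lemma sums_set_integral_disjoint_family:
  fixes h :: "'a \<Rightarrow> real"
  assumes "\<And>j. Q j \<in> sets M" "disjoint_family Q" "integrable M h"
  shows "(\<lambda>j. LINT x:Q j|M. h x) sums (LINT x:(\<Union>j. Q j)|M. h x)"
proof -
  have "set_integrable M (Q j) h" for j
    unfolding set_integrable_def using integrable_mult_indicator[OF assms(1,3)] by simp
  then have partial_sums: "(\<Sum>j<N. LINT x:Q j|M. h x) = (LINT x:(\<Union>j<N. Q j)|M. h x)" for N
    using assms(1,2)
    by (intro set_integral_finite_Union[symmetric]) (auto simp: disjoint_family_on_def)
  have "(\<lambda>N. LINT x:(\<Union>j<N. Q j)|M. h x) \<longlonglongrightarrow> (LINT x:(\<Union>j. Q j)|M. h x)"
    unfolding set_lebesgue_integral_def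
  proof (rule integral_dominated_convergence[where w = "\<lambda>x. \<bar>h x\<bar>"])
    show "AE x in M. (\<lambda>N. indicator (\<Union>j<N. Q j) x *\<^sub>R h x) \<longlonglongrightarrow> indicator (\<Union>j. Q j) x *\<^sub>R h x"
      by (intro AE_I2 tendsto_scaleR LIMSEQ_indicator_UN tendsto_const)
    show "AE x in M. norm (indicator (\<Union>j<N. Q j) x *\<^sub>R h x) \<le> \<bar>h x\<bar>" for N
      by (intro AE_I2) (simp add: abs_mult split: split_indicator)
  qed (use assms in \<open>auto simp: borel_measurable_integrable\<close>)
  then show ?thesis
    unfolding sums_def partial_sums .
qed

lemma HpMi_decomp_cong_AE:
  fixes \<Omega> :: "'a::euclidean_space set"
  assumes "\<Omega> \<in> sets lebesgue" "set_borel_measurable lebesgue \<Omega> f" "g \<in> borel_measurable lebesgue"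
    and "AE x in lebesgue. x \<in> \<Omega> \<longrightarrow> f x = g x"
    and "HpMi_decomp p \<Omega> g lam a"
  shows "HpMi_decomp p \<Omega> f lam a"
  unfolding HpMi_decomp_def
proof (intro conjI allI impI)
  fix \<phi> assume \<phi>: "test_function \<Omega> \<phi>"
  then have [measurable]: "\<phi> \<in> borel_measurable lebesgue"
    by (rule test_function_measurable)
  have [measurable]: "(\<lambda>x. indicator \<Omega> x * f x) \<in> borel_measurable lebesgue"
    using assms(2) by (simp add: set_borel_measurable_def)
  have "(LINT x:\<Omega>|lebesgue. f x * \<phi> x) = (LINT x:\<Omega>|lebesgue. indicator \<Omega> x * f x * \<phi> x)"
    using assms(1) by (intro set_lebesgue_integral_cong) auto
  also have "\<dots> = (LINT x:\<Omega>|lebesgue. g x * \<phi> x)"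
    using assms(1,3,4) by (intro set_lebesgue_integral_cong_AE) auto
  finally show "(\<lambda>j. lam j * (LINT x:\<Omega>|lebesgue. a j x * \<phi> x)) sums (LINT x:\<Omega>|lebesgue. f x * \<phi> x)"
    using assms(5) \<phi> by (simp add: HpMi_decomp_def)
qed (use assms(5) in \<open>simp_all add: HpMi_decomp_def\<close>)

lemma HpMi_norm_le_decomp:
  assumes "0 < p" "HpMi_decomp p \<Omega> f lam a" "(\<Sum>j. \<bar>lam j\<bar> powr p) \<le> V"
  shows "HpMi_norm p \<Omega> f \<le> ennreal (V powr (1/p))"
proof -
  define S where "S = {(\<Sum>j. \<bar>lam j\<bar> powr p) | lam a. HpMi_decomp p \<Omega> f lam a}"
  have mem: "(\<Sum>j. \<bar>lam j\<bar> powr p) \<in> S"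
    using assms(2) unfolding S_def by blast
  have nonneg: "0 \<le> s" if "s \<in> S" for s
    using that unfolding S_def HpMi_decomp_def by (auto intro: suminf_nonneg)
  then have "Inf S \<le> V"
    using cInf_lower[OF mem] assms(3) by (meson bdd_belowI order_trans)
  moreover have "0 \<le> Inf S"
    using mem nonneg by (intro cInf_greatest) auto
  ultimately have "Inf S powr (1/p) \<le> V powr (1/p)"
    using assms(1) by (intro powr_mono2) auto
  then show ?thesis
    using mem unfolding HpMi_norm_def Let_def S_def[symmetric] by (auto intro: ennreal_leI)
qed

lemma sums_set_integral_test_function:
  fixes \<Omega> :: "'a::euclidean_space set" and u :: "'a \<Rightarrow> real"
  assumes "\<Omega> \<in> sets lebesgue"
    and Q: "\<And>j. Q j \<in> sets lebesgue" "disjoint_family Q" "(\<Union>j. Q j) \<in> lmeasurable" "\<And>j. Q j \<subseteq> \<Omega>"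
    and u: "u \<in> borel_measurable lebesgue" "\<And>x. \<bar>u x\<bar> \<le> t" "\<And>x. x \<notin> (\<Union>j. Q j) \<Longrightarrow> u x = 0"
    and \<phi>: "test_function \<Omega> \<phi>"
  shows "(\<lambda>j. LINT x:Q j|lebesgue. u x * \<phi> x) sums (LINT x:\<Omega>|lebesgue. u x * \<phi> x)"
proof -
  note [measurable] = u(1) test_function_measurable[OF \<phi>]
  obtain P where P: "\<And>x. \<bar>\<phi> x\<bar> \<le> P"
    using test_function_bounded[OF \<phi>] by blast
  have "integrable lebesgue (\<lambda>x. u x * \<phi> x)"
  proof (rule integrableI_bounded_set[where A = "\<Union>j. Q j" and B = "t * P"])
    show "AE x in lebesgue. x \<in> (\<Union>j. Q j) \<longrightarrow> norm (u x * \<phi> x) \<le> t * P"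
      using u(2) P by (intro AE_I2) (simp add: abs_mult mult_mono')
  qed (use Q(3) u(3) in \<open>auto simp: fmeasurable_def\<close>)
  then have "(\<lambda>j. LINT x:Q j|lebesgue. u x * \<phi> x) sums (LINT x:(\<Union>j. Q j)|lebesgue. u x * \<phi> x)"
    by (rule sums_set_integral_disjoint_family[OF Q(1,2)])
  moreover have "(LINT x:(\<Union>j. Q j)|lebesgue. u x * \<phi> x) = (LINT x:\<Omega>|lebesgue. u x * \<phi> x)"
    using Q(4) u(3) unfolding set_lebesgue_integral_def
    by (intro Bochner_Integration.integral_cong) (auto split: split_indicator)
  ultimately show ?thesis
    by simp
qed

lemma HpMi_atom_normalized_restriction:
  fixes \<Omega> :: "'a::euclidean_space set" and u :: "'a \<Rightarrow> real"
  assumes "0 < p" "0 < t" "\<Omega> \<in> sets lebesgue"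
    and "0 < \<rho>" "ball x (2 * \<rho>) \<subseteq> \<Omega>" "ball x (4 * \<rho>) \<inter> frontier \<Omega> \<noteq> {}"
    and "Q \<in> sets lebesgue" "Q \<subseteq> ball x \<rho>"
    and "u \<in> borel_measurable lebesgue" "\<And>y. \<bar>u y\<bar> \<le> t"
  shows "HpMi_atom p \<Omega> (\<lambda>y. indicator Q y * u y / (t * measure lebesgue (ball x \<rho>) powr (1/p)))"
proof (rule HpMi_atom_boundaryI[OF assms(4-6)])
  note [measurable] = assms(3,7,9)
  define D where "D = t * measure lebesgue (ball x \<rho>) powr (1/p)"
  have D_pos: "0 < D"
    using assms(2,4) by (simp add: D_def content_ball_pos)
  show "set_borel_measurable lebesgue \<Omega> (\<lambda>y. indicator Q y * u y / D)"
    unfolding set_borel_measurable_def by measurable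
  show "indicator Q y * u y / D = 0" if "y \<notin> ball x \<rho>" for y
    using that assms(8) by (auto split: split_indicator)
  show "\<bar>indicator Q y * u y / D\<bar> \<le> measure lebesgue (ball x \<rho>) powr (-1/p)" for y
  proof -
    have "\<bar>indicator Q y * u y / D\<bar> \<le> \<bar>u y\<bar> / D"
      using D_pos by (simp add: abs_mult split: split_indicator)
    also have "\<dots> \<le> t / D"
      using D_pos assms(10) by (intro divide_right_mono) auto
    also have "\<dots> = measure lebesgue (ball x \<rho>) powr (-1/p)"
      using assms(2) by (simp add: D_def powr_minus_divide)
    finally show ?thesis .
  qed
qed

lemma HpMi_decomp_boundary_partition:
  fixes \<Omega> :: "'a::euclidean_space set" and u :: "'a \<Rightarrow> real"
  assumes "0 < p" "0 < t" "\<Omega> \<in> sets lebesgue"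
    and Q: "\<And>j. Q j \<in> sets lebesgue" "disjoint_family Q" "(\<Union>j. Q j) \<in> lmeasurable"
    and balls: "\<And>j. 0 < \<rho> j" "\<And>j. ball (z j) (2 * \<rho> j) \<subseteq> \<Omega>"
      "\<And>j. ball (z j) (4 * \<rho> j) \<inter> frontier \<Omega> \<noteq> {}" "\<And>j. Q j \<subseteq> ball (z j) (\<rho> j)"
    and u: "u \<in> borel_measurable lebesgue" "\<And>x. \<bar>u x\<bar> \<le> t" "\<And>x. x \<notin> (\<Union>j. Q j) \<Longrightarrow> u x = 0"
  defines "lam \<equiv> \<lambda>j. if Q j = {} then 0 else t * measure lebesgue (ball (z j) (\<rho> j)) powr (1/p)"
  assumes summable: "summable (\<lambda>j. \<bar>lam j\<bar> powr p)"
  shows "\<exists>a. HpMi_decomp p \<Omega> u lam a"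
proof -
  have Q_sub_\<Omega>: "Q j \<subseteq> \<Omega>" for j
    using balls(1,2,4)[of j] subset_ball[of "\<rho> j" "2 * \<rho> j" "z j"] by auto
  define a where "a j x = indicator (Q j) x * u x / (t * measure lebesgue (ball (z j) (\<rho> j)) powr (1/p))"
    for j x
  have lam_a: "lam j * a j x = indicator (Q j) x * u x" for j x
    using balls(1)[of j] assms(2) by (auto simp: lam_def a_def content_ball_pos)
  have atom: "HpMi_atom p \<Omega> (a j)" for j
    unfolding a_def by (rule HpMi_atom_normalized_restriction[OF assms(1-3) balls(1-3) Q(1) balls(4) u(1,2)])
  have "(\<lambda>j. lam j * (LINT x:\<Omega>|lebesgue. a j x * \<phi> x)) sums (LINT x:\<Omega>|lebesgue. u x * \<phi> x)"
    if \<phi>: "test_function \<Omega> \<phi>" for \<phi>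
  proof -
    have "(\<lambda>j. LINT x:Q j|lebesgue. u x * \<phi> x) sums (LINT x:\<Omega>|lebesgue. u x * \<phi> x)"
      using sums_set_integral_test_function[OF assms(3) Q Q_sub_\<Omega> u \<phi>] .
    moreover have "lam j * (LINT x:\<Omega>|lebesgue. a j x * \<phi> x) = (LINT x:Q j|lebesgue. u x * \<phi> x)" for j
    proof -
      have "lam j * (LINT x:\<Omega>|lebesgue. a j x * \<phi> x) = (LINT x:\<Omega>|lebesgue. (lam j * a j x) * \<phi> x)"
        by (simp flip: set_integral_mult_right add: mult.assoc)
      also have "\<dots> = (LINT x:Q j|lebesgue. u x * \<phi> x)"
        using Q_sub_\<Omega>[of j] unfolding lam_a set_lebesgue_integral_def
        by (intro Bochner_Integration.integral_cong) (auto split: split_indicator)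
      finally show ?thesis .
    qed
    ultimately show ?thesis
      by simp
  qed
  then show ?thesis
    using atom summable unfolding HpMi_decomp_def by blast
qed

lemma disjointed_cover_partition:
  assumes "E \<subseteq> (\<Union>j. B j)"
  shows "disjoint_family (\<lambda>j. E \<inter> disjointed B j)" "(\<Union>j. E \<inter> disjointed B j) = E"
    and "E \<inter> disjointed B j \<subseteq> B j" "i < j \<Longrightarrow> B i = B j \<Longrightarrow> E \<inter> disjointed B j = {}"
proof -
  show "disjoint_family (\<lambda>j. E \<inter> disjointed B j)"
    using disjoint_family_disjointed[of B] unfolding disjoint_family_on_def by blast
  show "(\<Union>j. E \<inter> disjointed B j) = E"
    using assms UN_disjointed_eq[of B] by blast
  show "E \<inter> disjointed B j \<subseteq> B j"
    using disjointed_subset[of B j] by blast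
  show "i < j \<Longrightarrow> B i = B j \<Longrightarrow> E \<inter> disjointed B j = {}"
    by (auto simp: disjointed_def)
qed

lemma boundary_ball_decomposition:
  fixes \<Omega> :: "'a::euclidean_space set" and u :: "'a \<Rightarrow> real"
  assumes "0 < p" "open \<Omega>" "c \<in> \<Omega>" "0 < r" "ball c (4 * r) \<inter> frontier \<Omega> \<noteq> {}"
    and u: "u \<in> borel_measurable lebesgue" "0 < t" "\<And>x. \<bar>u x\<bar> \<le> t"
      "\<And>x. x \<notin> \<Omega> \<inter> ball c r \<Longrightarrow> u x = 0"
  shows "\<exists>lam a. HpMi_decomp p \<Omega> u lam a \<and>
           (\<Sum>j. \<bar>lam j\<bar> powr p) \<le> 10 ^ DIM('a) * t powr p * measure lebesgue (ball c r)"
proof -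
  define \<rho> where "\<rho> x = infdist x (frontier \<Omega>) / 2" for x
  obtain z :: "nat \<Rightarrow> 'a" where z: "range z \<subseteq> \<Omega> \<inter> ball c r" "\<Omega> \<inter> ball c r \<subseteq> (\<Union>j. ball (z j) (\<rho> (z j)))"
    and z_sum: "\<And>F. finite F \<Longrightarrow> F \<subseteq> range z \<Longrightarrow>
      (\<Sum>x\<in>F. measure lebesgue (ball x (\<rho> x))) \<le> 10 ^ DIM('a) * measure lebesgue (ball c r)"
    using boundary_Whitney_cover[OF assms(2-5)] unfolding \<rho>_def by blast
  have boundary_ball: "0 < \<rho> (z j)" "ball (z j) (2 * \<rho> (z j)) \<subseteq> \<Omega>"
    "ball (z j) (4 * \<rho> (z j)) \<inter> frontier \<Omega> \<noteq> {}" for j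
    using infdist_frontier_boundary_ball[OF assms(2), of "z j"] z(1) assms(5)
    unfolding \<rho>_def by auto
  define B where "B j = ball (z j) (\<rho> (z j))" for j
  define Q where "Q j = \<Omega> \<inter> ball c r \<inter> disjointed B j" for j
  \<comment> \<open>A repeated centre yields an empty piece with coefficient 0, so each ball counts once below.\<close>
  have Q_disj: "disjoint_family Q" and Q_Union: "(\<Union>j. Q j) = \<Omega> \<inter> ball c r"
    and Q_ball: "Q j \<subseteq> ball (z j) (\<rho> (z j))"
    and Q_repeated: "i < j \<Longrightarrow> z i = z j \<Longrightarrow> Q j = {}" for i j
    using disjointed_cover_partition[of "\<Omega> \<inter> ball c r" B] z(2)
    unfolding Q_def[abs_def] B_def by auto
  have \<Omega>_sets: "\<Omega> \<in> sets lebesgue"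
    using assms(2) by (simp add: borel_open)
  have Q_sets: "Q j \<in> sets lebesgue" for j
    using \<Omega>_sets unfolding Q_def disjointed_def B_def by (intro sets.Int sets.Diff sets.finite_UN) auto
  define lam where "lam = (\<lambda>j. if Q j = {} then 0 else t * measure lebesgue (ball (z j) (\<rho> (z j))) powr (1/p))"
  have partial_sums: "(\<Sum>j<N. \<bar>lam j\<bar> powr p) \<le> 10 ^ DIM('a) * t powr p * measure lebesgue (ball c r)" for N
  proof -
    define S where "S = {j \<in> {..<N}. Q j \<noteq> {}}"
    have "inj_on z S"
    proof (rule inj_onI)
      fix i j assume "i \<in> S" "j \<in> S" "z i = z j"
      then show "i = j"
        using Q_repeated[of i j] Q_repeated[of j i]
        by (cases i j rule: linorder_cases) (auto simp: S_def)
    qed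
    have "\<bar>lam j\<bar> powr p = (if Q j \<noteq> {} then t powr p * measure lebesgue (ball (z j) (\<rho> (z j))) else 0)" for j
      using u(2) boundary_ball(1)[of j] assms(1)
      by (simp add: lam_def powr_mult powr_powr content_ball_pos abs_mult)
    then have "(\<Sum>j<N. \<bar>lam j\<bar> powr p) = (\<Sum>j\<in>S. t powr p * measure lebesgue (ball (z j) (\<rho> (z j))))"
      unfolding S_def by (simp only: sum.inter_filter finite_lessThan)
    also have "\<dots> = t powr p * (\<Sum>j\<in>S. measure lebesgue (ball (z j) (\<rho> (z j))))"
      by (rule sum_distrib_left[symmetric])
    also have "\<dots> = t powr p * (\<Sum>x\<in>z ` S. measure lebesgue (ball x (\<rho> x)))"
      by (simp add: sum.reindex[OF \<open>inj_on z S\<close>])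
    also have "\<dots> \<le> t powr p * (10 ^ DIM('a) * measure lebesgue (ball c r))"
      by (intro mult_left_mono z_sum) (auto simp: S_def)
    finally show ?thesis
      by (simp add: mult_ac)
  qed
  have summable: "summable (\<lambda>j. \<bar>lam j\<bar> powr p)"
    by (rule summableI_nonneg_bounded[OF _ partial_sums]) simp
  have "(\<Union>j. Q j) \<in> lmeasurable"
    unfolding Q_Union using fmeasurable_Int_fmeasurable[OF lmeasurable_ball \<Omega>_sets]
    by (simp add: Int_commute)
  moreover have "u x = 0" if "x \<notin> (\<Union>j. Q j)" for x
    using that unfolding Q_Union by (rule u(4))
  ultimately obtain a where "HpMi_decomp p \<Omega> u lam a"
    using HpMi_decomp_boundary_partition[OF assms(1) u(2) \<Omega>_sets Q_sets Q_disj _ boundary_ball Q_ball u(1,3),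
        folded lam_def] summable[unfolded lam_def] by blast
  moreover have "(\<Sum>j. \<bar>lam j\<bar> powr p) \<le> 10 ^ DIM('a) * t powr p * measure lebesgue (ball c r)"
    by (rule suminf_le_const[OF summable partial_sums])
  ultimately show ?thesis
    by blast
qed

lemma boundary_supported_decomposition:
  fixes \<Omega> :: "'a::euclidean_space set" and f :: "'a \<Rightarrow> real"
  assumes "0 < p" "open \<Omega>" "c \<in> \<Omega>" "0 < r" "ball c (4 * r) \<inter> frontier \<Omega> \<noteq> {}"
    and f: "set_borel_measurable lebesgue \<Omega> f" "\<forall>x\<in>\<Omega>. x \<notin> ball c r \<longrightarrow> f x = 0"
      "AE x in lebesgue. x \<in> \<Omega> \<longrightarrow> \<bar>f x\<bar> \<le> C0 * measure lebesgue (ball c r) powr (-1/p)"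
  shows "\<exists>lam a. HpMi_decomp p \<Omega> f lam a \<and> (\<Sum>j. \<bar>lam j\<bar> powr p) \<le> 10 ^ DIM('a) * max C0 1 powr p"
proof -
  define m where "m = measure lebesgue (ball c r)"
  have m_pos: "0 < m"
    using assms(4) by (simp add: m_def content_ball_pos)
  \<comment> \<open>\<open>max C0 1\<close> rather than \<open>C0\<close>, which may be \<open>\<le> 0\<close>: the level \<open>t\<close> must be positive.\<close>
  define t where "t = max C0 1 * m powr (-1/p)"
  have t_pos: "0 < t"
    using m_pos by (simp add: t_def)
  \<comment> \<open>Atoms must be bounded everywhere, whereas \<open>f\<close> is bounded only a.e. on \<open>\<Omega>\<close>: truncate.\<close>
  define F where "F = (\<lambda>x. indicator \<Omega> x * f x)"
  define u where "u x = (if \<bar>F x\<bar> \<le> t then F x else 0)" for x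
  have [measurable]: "F \<in> borel_measurable lebesgue"
    using f(1) by (simp add: F_def set_borel_measurable_def)
  then have u_meas: "u \<in> borel_measurable lebesgue"
    unfolding u_def by measurable
  have u_bound: "\<bar>u x\<bar> \<le> t" for x
    using t_pos by (simp add: u_def)
  have u_support: "u x = 0" if "x \<notin> \<Omega> \<inter> ball c r" for x
    using that f(2) by (auto simp: u_def F_def)
  have f_eq_u: "AE x in lebesgue. x \<in> \<Omega> \<longrightarrow> f x = u x"
    using f(3)
  proof eventually_elim
    case (elim x)
    have "C0 * m powr (-1/p) \<le> t"
      unfolding t_def by (intro mult_right_mono) auto
    then show ?case
      using elim by (auto simp: u_def F_def m_def)
  qed
  obtain lam a where u_decomp: "HpMi_decomp p \<Omega> u lam a"
    and "(\<Sum>j. \<bar>lam j\<bar> powr p) \<le> 10 ^ DIM('a) * (t powr p * m)"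
    using boundary_ball_decomposition[OF assms(1-5) u_meas t_pos u_bound u_support] m_def
    by (auto simp: mult.assoc)
  moreover have "t powr p * m = max C0 1 powr p"
  proof -
    have "t powr p = max C0 1 powr p * (m powr (-1/p)) powr p"
      unfolding t_def by (rule powr_mult)
    also have "(m powr (-1/p)) powr p = 1 / m"
      using assms(1) m_pos by (simp only: powr_powr) (simp add: powr_minus_divide)
    finally show ?thesis
      using m_pos by simp
  qed
  moreover have "HpMi_decomp p \<Omega> f lam a"
    using assms(2) by (intro HpMi_decomp_cong_AE[OF _ f(1) u_meas f_eq_u u_decomp]) (simp add: borel_open)
  ultimately show ?thesis
    by auto
qed

theorem lemma4p4:
  fixes p C0 :: real
  assumes "0 < p" and "p \<le> 1"
  shows "\<exists>C::real. \<forall>(\<Omega>::'a::euclidean_space set) c r (f::'a \<Rightarrow> real).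
     open \<Omega> \<and> c \<in> \<Omega> \<and> r > 0 \<and> ball c (4*r) \<inter> frontier \<Omega> \<noteq> {} \<and>
     set_borel_measurable lebesgue \<Omega> f \<and>
     (\<forall>x\<in>\<Omega>. x \<notin> ball c r \<longrightarrow> f x = 0) \<and>
     (AE x in lebesgue. x \<in> \<Omega> \<longrightarrow> \<bar>f x\<bar> \<le> C0 * measure lebesgue (ball c r) powr (-1/p))
     \<longrightarrow> HpMi_norm p \<Omega> f \<le> ennreal C"
proof (intro exI allI impI)
  fix \<Omega> :: "'a set" and c r and f :: "'a \<Rightarrow> real"
  assume "open \<Omega> \<and> c \<in> \<Omega> \<and> r > 0 \<and> ball c (4*r) \<inter> frontier \<Omega> \<noteq> {} \<and>
     set_borel_measurable lebesgue \<Omega> f \<and> (\<forall>x\<in>\<Omega>. x \<notin> ball c r \<longrightarrow> f x = 0) \<and>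
     (AE x in lebesgue. x \<in> \<Omega> \<longrightarrow> \<bar>f x\<bar> \<le> C0 * measure lebesgue (ball c r) powr (-1/p))"
  then have "\<exists>lam a. HpMi_decomp p \<Omega> f lam a \<and> (\<Sum>j. \<bar>lam j\<bar> powr p) \<le> 10 ^ DIM('a) * max C0 1 powr p"
    by (intro boundary_supported_decomposition[OF assms(1)]) auto
  then obtain lam a where "HpMi_decomp p \<Omega> f lam a"
    and "(\<Sum>j. \<bar>lam j\<bar> powr p) \<le> 10 ^ DIM('a) * max C0 1 powr p"
    by blast
  then show "HpMi_norm p \<Omega> f \<le> ennreal ((10 ^ DIM('a) * max C0 1 powr p) powr (1/p))"
    using assms(1) by (rule HpMi_norm_le_decomp[rotated])
qed

end
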